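(* Let $1\le p\ne q<\infty$ and let $T\in B(\ell^p)$, $S\in B(\ell^q)$. If $T$ or $S$ is compact, then $T$ and $S$ are not equivalent after extension.
   Context: $\ell^p=\ell^p(\mathbb N)$ over $\mathbb C$; $B(X,Y)$ denotes bounded linear operators; invertibility means bounded inverse; $X\oplus Y$ is the $\ell^2$-direct sum and $\mathrm{id}_X$ the identity. Operators $T\in B(X)$ and $S\in B(Y)$ are equivalent after extension if there exist Banach spaces $X'$, $Y'$ and invertible $E\in B(Y\oplus Y',X\oplus X')$, $F\in B(X\oplus X',Y\oplus Y')$ with $\begin{bmatrix}T&0\\0&\mathrm{id}_{X'}\end{bmatrix}=E\begin{bmatrix}S&0\\0&\mathrm{id}_{Y'}\end{bmatrix}F$. *)

theory Defs
  imports "HOL-Analysis.Analysis"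
begin

text \<open>HOL has no class of complex vector spaces; a complex Banach space is a real
Banach space with a scalar multiplication by complex numbers that extends the real one
and is absolutely homogeneous for the norm.\<close>

class complex_banach = banach +
  fixes cscale :: "complex \<Rightarrow> 'a \<Rightarrow> 'a"
  assumes cscale_add_right: "cscale a (x + y) = cscale a x + cscale a y"
    and cscale_add_left: "cscale (a + b) x = cscale a x + cscale b x"
    and cscale_assoc: "cscale a (cscale b x) = cscale (a * b) x"
    and cscale_one: "cscale 1 x = x"
    and cscale_of_real: "cscale (complex_of_real r) x = scaleR r x"
    and norm_cscale: "norm (cscale a x) = norm a * norm x"

instantiation complex :: complex_banach
begin
definition cscale_complex :: "complex \<Rightarrow> complex \<Rightarrow> complex" where
  "cscale_complex a x = a * x"
instance
  by standard (auto simp: cscale_complex_def algebra_simps norm_mult scaleR_conv_of_real)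
end

definition lp :: "real \<Rightarrow> (nat \<Rightarrow> complex) set" where
  "lp p = {f. summable (\<lambda>n. norm (f n) powr p)}"

definition lp_norm :: "real \<Rightarrow> (nat \<Rightarrow> complex) \<Rightarrow> real" where
  "lp_norm p f = (\<Sum>n. norm (f n) powr p) powr (1 / p)"

definition lp_bounded_op :: "real \<Rightarrow> real \<Rightarrow> ((nat \<Rightarrow> complex) \<Rightarrow> (nat \<Rightarrow> complex)) \<Rightarrow> bool" where
  "lp_bounded_op p q T \<longleftrightarrow>
     (\<forall>f\<in>lp p. T f \<in> lp q) \<and>
     (\<forall>f\<in>lp p. \<forall>g\<in>lp p. T (\<lambda>n. f n + g n) = (\<lambda>n. T f n + T g n)) \<and>
     (\<forall>c. \<forall>f\<in>lp p. T (\<lambda>n. c * f n) = (\<lambda>n. c * T f n)) \<and>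
     (\<exists>C. \<forall>f\<in>lp p. lp_norm q (T f) \<le> C * lp_norm p f)"

text \<open>Compact operators on \<open>\<ell>^p\<close>: bounded, and the image of every bounded sequence
has a subsequence converging in \<open>\<ell>^p\<close> (i.e. the image of the unit ball is relatively
compact, as \<open>\<ell>^p\<close> is a metric space).\<close>

definition lp_compact_op :: "real \<Rightarrow> ((nat \<Rightarrow> complex) \<Rightarrow> (nat \<Rightarrow> complex)) \<Rightarrow> bool" where
  "lp_compact_op p T \<longleftrightarrow> lp_bounded_op p p T \<and>
     (\<forall>x :: nat \<Rightarrow> (nat \<Rightarrow> complex).
        (\<forall>k. x k \<in> lp p) \<and> (\<exists>B. \<forall>k. lp_norm p (x k) \<le> B) \<longrightarrow>
        (\<exists>r g. strict_mono r \<and> g \<in> lp p \<and>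
               (\<lambda>k. lp_norm p (\<lambda>n. T (x (r k)) n - g n)) \<longlonglongrightarrow> 0))"

definition ds_carrier :: "real \<Rightarrow> ((nat \<Rightarrow> complex) \<times> 'a::complex_banach) set" where
  "ds_carrier p = lp p \<times> UNIV"

definition ds_norm :: "real \<Rightarrow> (nat \<Rightarrow> complex) \<times> 'a::complex_banach \<Rightarrow> real" where
  "ds_norm p u = sqrt ((lp_norm p (fst u))\<^sup>2 + (norm (snd u))\<^sup>2)"

definition ds_add :: "(nat \<Rightarrow> complex) \<times> 'a::complex_banach \<Rightarrow> (nat \<Rightarrow> complex) \<times> 'a \<Rightarrow> (nat \<Rightarrow> complex) \<times> 'a" where
  "ds_add u v = ((\<lambda>n. fst u n + fst v n), snd u + snd v)"

definition ds_scale :: "complex \<Rightarrow> (nat \<Rightarrow> complex) \<times> 'a::complex_banach \<Rightarrow> (nat \<Rightarrow> complex) \<times> 'a" where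
  "ds_scale c u = ((\<lambda>n. c * fst u n), cscale c (snd u))"

definition ds_bounded_op :: "real \<Rightarrow> real \<Rightarrow>
    ((nat \<Rightarrow> complex) \<times> 'a::complex_banach \<Rightarrow> (nat \<Rightarrow> complex) \<times> 'b::complex_banach) \<Rightarrow> bool" where
  "ds_bounded_op p q E \<longleftrightarrow>
     (\<forall>u\<in>ds_carrier p. E u \<in> ds_carrier q) \<and>
     (\<forall>u\<in>ds_carrier p. \<forall>v\<in>ds_carrier p. E (ds_add u v) = ds_add (E u) (E v)) \<and>
     (\<forall>c. \<forall>u\<in>ds_carrier p. E (ds_scale c u) = ds_scale c (E u)) \<and>
     (\<exists>C. \<forall>u\<in>ds_carrier p. ds_norm q (E u) \<le> C * ds_norm p u)"

definition ds_invertible :: "real \<Rightarrow> real \<Rightarrow>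
    ((nat \<Rightarrow> complex) \<times> 'a::complex_banach \<Rightarrow> (nat \<Rightarrow> complex) \<times> 'b::complex_banach) \<Rightarrow> bool" where
  "ds_invertible p q E \<longleftrightarrow> ds_bounded_op p q E \<and>
     (\<exists>G :: (nat \<Rightarrow> complex) \<times> 'b \<Rightarrow> (nat \<Rightarrow> complex) \<times> 'a.
        ds_bounded_op q p G \<and>
        (\<forall>u\<in>ds_carrier p. G (E u) = u) \<and> (\<forall>v\<in>ds_carrier q. E (G v) = v))"

definition ds_diag :: "((nat \<Rightarrow> complex) \<Rightarrow> (nat \<Rightarrow> complex)) \<Rightarrow> (nat \<Rightarrow> complex) \<times> 'a \<Rightarrow> (nat \<Rightarrow> complex) \<times> 'a" where
  "ds_diag T u = (T (fst u), snd u)"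

text \<open>\<open>E\<close>, \<open>F\<close> witness that \<open>T \<in> B(\<ell>^p)\<close> and \<open>S \<in> B(\<ell>^q)\<close> are equivalent after
extension via the extension spaces \<open>X'\<close> (type \<open>'x\<close>) and \<open>Y'\<close> (type \<open>'y\<close>):
\<open>E \<in> B(\<ell>^q \<oplus> Y', \<ell>^p \<oplus> X')\<close>, \<open>F \<in> B(\<ell>^p \<oplus> X', \<ell>^q \<oplus> Y')\<close> invertible and
\<open>T \<oplus> id = E (S \<oplus> id) F\<close>.\<close>

definition eae_witness :: "real \<Rightarrow> real \<Rightarrow>
    ((nat \<Rightarrow> complex) \<Rightarrow> (nat \<Rightarrow> complex)) \<Rightarrow> ((nat \<Rightarrow> complex) \<Rightarrow> (nat \<Rightarrow> complex)) \<Rightarrow>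
    ((nat \<Rightarrow> complex) \<times> 'y::complex_banach \<Rightarrow> (nat \<Rightarrow> complex) \<times> 'x::complex_banach) \<Rightarrow>
    ((nat \<Rightarrow> complex) \<times> 'x \<Rightarrow> (nat \<Rightarrow> complex) \<times> 'y) \<Rightarrow> bool" where
  "eae_witness p q T S E F \<longleftrightarrow>
     ds_invertible q p E \<and> ds_invertible p q F \<and>
     (\<forall>u\<in>ds_carrier p. ds_diag T u = E (ds_diag S (F u)))"

end

theory Submission
  imports Defs
begin

text \<open>Suppose \<open>T\<close> is compact; the case of \<open>S\<close> is symmetric, with \<open>F\<close> replaced by its inverse.
  By \<open>T \<oplus> id = E (S \<oplus> id) F\<close>, the \<open>Y'\<close>-component of \<open>F (e, 0)\<close> depends Lipschitz-continuously
  on \<open>T e\<close>, so by compactness these components form a Cauchy sequence along a subsequence of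
  the unit vectors \<open>e\<^sub>k\<close>. A gliding hump argument then picks differences \<open>e\<^sub>k - e\<^sub>l\<close> whose images
  under \<open>F\<close> are, up to summably small errors, disjointly supported humps in \<open>\<ell>\<^sup>q\<close> with norms
  bounded above and below. Summing \<open>N\<close> of them, the isomorphism \<open>F\<close> maps a vector of norm
  \<open>(2 N) powr (1 / p)\<close> to one of norm comparable to \<open>N powr (1 / q)\<close>, which is impossible
  for \<open>p \<noteq> q\<close>.\<close>

lemma larger_powr_dominates:
  fixes x y a b c :: real
  assumes "y < x" "0 \<le> y" "0 < a" "0 \<le> b" "0 \<le> c"
  obtains N :: nat where "1 \<le> N" "b * real N powr y + c < a * real N powr x"
proof -
  define M where "M = ((b + c) / a + 1) powr (1 / (x - y))"
  define N where "N = nat \<lceil>M\<rceil> + 1"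
  have N: "1 \<le> N" "M \<le> real N"
    unfolding N_def by linarith+
  have Ny: "1 \<le> real N powr y"
    using N assms by (intro ge_one_powr_ge_zero) auto
  have "(b + c) / a + 1 = M powr (x - y)"
    using assms by (simp add: M_def powr_powr)
  also have "\<dots> \<le> real N powr (x - y)"
    using N assms by (intro powr_mono2) (auto simp: M_def)
  finally have "b + c < a * real N powr (x - y)"
    using assms by (simp add: field_simps)
  then have "(b + c) * real N powr y < a * real N powr (x - y) * real N powr y"
    using Ny N(1) by (intro mult_strict_right_mono) auto
  moreover have "b * real N powr y + c \<le> (b + c) * real N powr y"
    using Ny assms mult_left_mono[of 1 "real N powr y" c] by (simp add: distrib_right)
  ultimately show ?thesis
    using that[OF N(1)] by (simp add: powr_add[symmetric] mult.assoc)
qed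

lemma sum_half_powers_le_1: "(\<Sum>j<N. (1 / 2 :: real) ^ Suc j) \<le> 1"
  using sum_le_suminf[OF sums_summable[OF power_half_series], of "{..<N}"]
    sums_unique[OF power_half_series] by simp

lemma bounded_imp_coordinatewise_convergent_subseq:
  fixes h :: "nat \<Rightarrow> nat \<Rightarrow> complex"
  assumes "\<And>k i. norm (h k i) \<le> B"
  obtains \<sigma> where "strict_mono \<sigma>" "\<And>i. i < m \<Longrightarrow> convergent (\<lambda>k. h (\<sigma> k) i)"
proof -
  have "\<exists>\<sigma>. strict_mono \<sigma> \<and> (\<forall>i<m. convergent (\<lambda>k. h (\<sigma> k) i))"
  proof (induction m)
    case 0
    show ?case
      using strict_mono_id by blast
  next
    case (Suc m)
    then obtain \<sigma> where \<sigma>: "strict_mono \<sigma>" and conv: "\<forall>i<m. convergent (\<lambda>k. h (\<sigma> k) i)"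
      by blast
    have "bounded (range (\<lambda>k. h (\<sigma> k) m))"
      using assms by (auto simp: bounded_iff)
    then obtain l \<tau> where \<tau>: "strict_mono \<tau>" and lim: "((\<lambda>k. h (\<sigma> k) m) \<circ> \<tau>) \<longlonglongrightarrow> l"
      using bounded_imp_convergent_subsequence by blast
    have "convergent (\<lambda>k. h ((\<sigma> \<circ> \<tau>) k) i)" if "i < Suc m" for i
    proof (cases "i = m")
      case True
      then show ?thesis
        using lim by (auto simp: convergent_def o_def)
    next
      case False
      then have "convergent ((\<lambda>k. h (\<sigma> k) i) \<circ> \<tau>)"
        using conv that \<tau> by (intro convergent_subseq_convergent) auto
      then show ?thesis
        by (simp add: o_def)
    qed
    then show ?case
      using strict_mono_o[OF \<sigma> \<tau>] by blast
  qed
  then show ?thesis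
    using that by blast
qed

lemma Cauchy_uniform_finite:
  fixes X :: "nat \<Rightarrow> nat \<Rightarrow> 'a::real_normed_vector"
  assumes "\<And>i. i < m \<Longrightarrow> Cauchy (\<lambda>k. X k i)" and "0 < e"
  obtains K where "\<And>i a b. i < m \<Longrightarrow> K \<le> a \<Longrightarrow> K \<le> b \<Longrightarrow> norm (X a i - X b i) < e"
proof -
  have "\<forall>\<^sub>F K in sequentially. \<forall>i\<in>{..<m}. \<forall>a\<ge>K. \<forall>b\<ge>K. norm (X a i - X b i) < e"
  proof (rule eventually_ball_finite[OF finite_lessThan], rule ballI)
    fix i assume "i \<in> {..<m}"
    with assms obtain M where "\<forall>a\<ge>M. \<forall>b\<ge>M. norm (X a i - X b i) < e"
      using CauchyD by blast
    then show "\<forall>\<^sub>F K in sequentially. \<forall>a\<ge>K. \<forall>b\<ge>K. norm (X a i - X b i) < e"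
      unfolding eventually_sequentially by (intro exI[of _ M]) auto
  qed
  then show ?thesis
    using that unfolding eventually_sequentially by (meson lessThan_iff order_refl)
qed

section \<open>Norm estimates in \<open>\<ell>\<^sup>p\<close>\<close>

lemma lp_norm_nonneg: "0 \<le> lp_norm s f"
  by (simp add: lp_norm_def)

lemma lp_summable: "f \<in> lp s \<Longrightarrow> summable (\<lambda>n. norm (f n) powr s)"
  by (simp add: lp_def)

lemma lp_norm_powr:
  assumes "f \<in> lp s" "0 < s"
  shows "lp_norm s f powr s = (\<Sum>n. norm (f n) powr s)"
  using assms suminf_nonneg[OF lp_summable[OF assms(1)]]
  by (simp add: lp_norm_def powr_powr)

lemma lp_norm_eq_0_imp:
  assumes "f \<in> lp s" "lp_norm s f = 0" "0 < s"
  shows "f n = 0"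
proof -
  have "(\<Sum>n. norm (f n) powr s) = 0"
    using lp_norm_powr[OF assms(1,3)] assms(2,3) by simp
  then show ?thesis
    using suminf_eq_zero_iff[OF lp_summable[OF assms(1)]] by simp
qed

lemma powr_convex_combination_le:
  fixes x y l s :: real
  assumes "0 \<le> x" "0 \<le> y" "0 \<le> l" "l \<le> 1" "1 \<le> s"
  shows "(l * x + (1 - l) * y) powr s \<le> l * x powr s + (1 - l) * y powr s"
proof (cases "0 < x \<and> 0 < y")
  case True
  then show ?thesis
    using convex_onD[OF powr_convex[OF assms(5)], of "1 - l" x y] assms by simp
next
  case False
  \<comment> \<open>\<open>powr_convex\<close> only covers the open half-line; on the boundary \<open>t powr s \<le> t\<close> suffices.\<close>
  have scale: "(t * w) powr s \<le> t * w powr s" if "0 \<le> t" "t \<le> 1" "0 \<le> w" for t w :: real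
  proof -
    have "t powr s \<le> t"
      using that assms powr_mono'[of 1 s t] by (cases "t = 0") auto
    then show ?thesis
      using that by (simp add: powr_mult mult_right_mono)
  qed
  from False assms consider "x = 0" | "y = 0" by linarith
  then show ?thesis
    by cases (use scale[of "1 - l" y] scale[of l x] assms in auto)
qed

lemma lp_normalised_sums:
  assumes "h \<in> lp s" "0 < s" "0 < lp_norm s h"
  shows "(\<lambda>n. (norm (h n) / lp_norm s h) powr s) sums 1"
proof -
  have sum: "(\<Sum>n. norm (h n) powr s) = lp_norm s h powr s"
    using lp_norm_powr[OF assms(1,2)] by simp
  have "(\<lambda>n. norm (h n) powr s / lp_norm s h powr s) sums ((\<Sum>n. norm (h n) powr s) / lp_norm s h powr s)"
    by (rule sums_divide[OF summable_sums[OF lp_summable[OF assms(1)]]])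
  then show ?thesis
    using assms(3) by (simp add: sum powr_divide)
qed

text \<open>Minkowski's inequality for non-zero summands: with weights proportional to the two norms,
  the convexity of \<open>t \<mapsto> t powr s\<close> bounds each term by a convex combination of the normalised ones.\<close>

lemma lp_minkowski_pos:
  assumes f: "f \<in> lp s" and g: "g \<in> lp s" and s: "1 \<le> s"
    and A: "0 < lp_norm s f" and B: "0 < lp_norm s g"
  shows "summable (\<lambda>n. norm (f n + g n) powr s)"
    and "(\<Sum>n. norm (f n + g n) powr s) \<le> (lp_norm s f + lp_norm s g) powr s"
proof -
  define l where "l = lp_norm s f / (lp_norm s f + lp_norm s g)"
  have l: "0 \<le> l" "l \<le> 1" "1 - l = lp_norm s g / (lp_norm s f + lp_norm s g)"
    using A B by (auto simp: l_def field_simps)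
  define R where "R n = (lp_norm s f + lp_norm s g) powr s *
    (l * (norm (f n) / lp_norm s f) powr s + (1 - l) * (norm (g n) / lp_norm s g) powr s)" for n
  have bound: "norm (f n + g n) powr s \<le> R n" for n
  proof -
    have "norm (f n + g n) \<le> (lp_norm s f + lp_norm s g) *
        (l * (norm (f n) / lp_norm s f) + (1 - l) * (norm (g n) / lp_norm s g))"
      using norm_triangle_ineq[of "f n" "g n"] A B l(3) by (simp add: l_def distrib_left)
    then have "norm (f n + g n) powr s \<le> ((lp_norm s f + lp_norm s g) *
        (l * (norm (f n) / lp_norm s f) + (1 - l) * (norm (g n) / lp_norm s g))) powr s"
      using s by (intro powr_mono2) auto
    also have "\<dots> \<le> R n"
      unfolding R_def
      using A B l(1,2) s powr_convex_combination_le[of "norm (f n) / lp_norm s f" "norm (g n) / lp_norm s g" l s]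
      by (subst powr_mult) (auto intro: mult_left_mono)
    finally show ?thesis .
  qed
  have "R sums ((lp_norm s f + lp_norm s g) powr s * (l * 1 + (1 - l) * 1))"
    unfolding R_def using lp_normalised_sums[OF f _ A] lp_normalised_sums[OF g _ B] s
    by (intro sums_mult sums_add) auto
  then have R: "R sums ((lp_norm s f + lp_norm s g) powr s)"
    by simp
  show summable: "summable (\<lambda>n. norm (f n + g n) powr s)"
    by (rule summable_comparison_test'[OF sums_summable[OF R]]) (use bound in auto)
  show "(\<Sum>n. norm (f n + g n) powr s) \<le> (lp_norm s f + lp_norm s g) powr s"
    using suminf_le[OF bound summable sums_summable[OF R]] sums_unique[OF R] by simp
qed

lemma lp_minkowski:
  assumes f: "f \<in> lp s" and g: "g \<in> lp s" and s: "1 \<le> s"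
  shows "(\<lambda>n. f n + g n) \<in> lp s"
    and "lp_norm s (\<lambda>n. f n + g n) \<le> lp_norm s f + lp_norm s g"
proof -
  have "(\<lambda>n. f n + g n) \<in> lp s \<and> lp_norm s (\<lambda>n. f n + g n) \<le> lp_norm s f + lp_norm s g"
  proof (cases "lp_norm s f = 0 \<or> lp_norm s g = 0")
    case True
    then show ?thesis
      using lp_norm_eq_0_imp[OF f] lp_norm_eq_0_imp[OF g] s f g lp_norm_nonneg
      by (auto simp del: lp_norm_def)
  next
    case False
    then have pos: "0 < lp_norm s f" "0 < lp_norm s g"
      using lp_norm_nonneg by (auto simp: order_le_less)
    note sum = lp_minkowski_pos[OF f g s pos]
    have "lp_norm s (\<lambda>n. f n + g n) \<le> ((lp_norm s f + lp_norm s g) powr s) powr (1 / s)"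
      unfolding lp_norm_def[of s "\<lambda>n. f n + g n"]
      using sum s suminf_nonneg[OF sum(1)] by (intro powr_mono2) auto
    also have "\<dots> = lp_norm s f + lp_norm s g"
      using pos s by (simp add: powr_powr)
    finally show ?thesis
      using sum(1) by (simp add: lp_def)
  qed
  then show "(\<lambda>n. f n + g n) \<in> lp s" "lp_norm s (\<lambda>n. f n + g n) \<le> lp_norm s f + lp_norm s g"
    by auto
qed

lemma lp_uminus: "f \<in> lp s \<Longrightarrow> (\<lambda>n. - f n) \<in> lp s"
  by (simp add: lp_def)

lemma lp_norm_uminus: "lp_norm s (\<lambda>n. - f n) = lp_norm s f"
  by (simp add: lp_norm_def)

lemma lp_diff:
  assumes "f \<in> lp s" "g \<in> lp s" "1 \<le> s"
  shows "(\<lambda>n. f n - g n) \<in> lp s"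
    and "lp_norm s (\<lambda>n. f n - g n) \<le> lp_norm s f + lp_norm s g"
  using lp_minkowski[OF assms(1) lp_uminus[OF assms(2)] assms(3)]
  by (simp_all add: lp_norm_uminus)

lemma lp_norm_mono:
  assumes g: "g \<in> lp s" and le: "\<And>n. norm (f n) \<le> norm (g n)" and s: "0 < s"
  shows "f \<in> lp s" and "lp_norm s f \<le> lp_norm s g"
proof -
  have le_powr: "norm (f n) powr s \<le> norm (g n) powr s" for n
    using le s by (intro powr_mono2) auto
  have sf: "summable (\<lambda>n. norm (f n) powr s)"
    by (rule summable_comparison_test'[OF lp_summable[OF g]]) (use le_powr in auto)
  then show "f \<in> lp s"
    by (simp add: lp_def)
  have "(\<Sum>n. norm (f n) powr s) \<le> (\<Sum>n. norm (g n) powr s)"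
    by (rule suminf_le[OF le_powr sf lp_summable[OF g]])
  then show "lp_norm s f \<le> lp_norm s g"
    unfolding lp_norm_def using s suminf_nonneg[OF sf] by (intro powr_mono2) auto
qed

lemma norm_le_lp_norm:
  assumes f: "f \<in> lp s" and s: "0 < s"
  shows "norm (f i) \<le> lp_norm s f"
proof -
  have "norm (f i) powr s \<le> (\<Sum>n. norm (f n) powr s)"
    using sum_le_suminf[OF lp_summable[OF f], of "{i}"] by simp
  then have "(norm (f i) powr s) powr (1 / s) \<le> (\<Sum>n. norm (f n) powr s) powr (1 / s)"
    using s by (intro powr_mono2) auto
  then show ?thesis
    using s by (simp add: powr_powr lp_norm_def)
qed

lemma lp_indicator:
  assumes "finite A" and f: "\<And>n. norm (f n) = (if n \<in> A then 1 else 0)" and "0 < s"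
  shows "f \<in> lp s" and "lp_norm s f = real (card A) powr (1 / s)"
proof -
  have "(\<lambda>n. if n \<in> A then 1 else 0 :: real) sums real (card A)"
    using sums_If_finite_set[OF assms(1), of "\<lambda>_. 1 :: real"] by simp
  moreover have "(\<lambda>n. norm (f n) powr s) = (\<lambda>n. if n \<in> A then 1 else 0)"
    using f assms(3) by (auto simp: fun_eq_iff)
  ultimately show "f \<in> lp s" "lp_norm s f = real (card A) powr (1 / s)"
    unfolding lp_def lp_norm_def by (auto simp: sums_iff)
qed

definition lp_unit :: "nat \<Rightarrow> nat \<Rightarrow> complex" where
  "lp_unit k n = (if n = k then 1 else 0)"

lemma lp_unit: "0 < s \<Longrightarrow> lp_unit k \<in> lp s" "0 < s \<Longrightarrow> lp_norm s (lp_unit k) = 1"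
  using lp_indicator[of "{k}" "lp_unit k" s] by (simp_all add: lp_unit_def)

lemma lp_sum:
  fixes f :: "nat \<Rightarrow> nat \<Rightarrow> complex"
  assumes f: "\<And>j. j < N \<Longrightarrow> f j \<in> lp s" and s: "1 \<le> s"
  shows "(\<lambda>n. \<Sum>j<N. f j n) \<in> lp s"
    and "lp_norm s (\<lambda>n. \<Sum>j<N. f j n) \<le> (\<Sum>j<N. lp_norm s (f j))"
proof -
  have "(\<lambda>n. \<Sum>j<N. f j n) \<in> lp s \<and> lp_norm s (\<lambda>n. \<Sum>j<N. f j n) \<le> (\<Sum>j<N. lp_norm s (f j))"
    using f
  proof (induction N)
    case 0
    then show ?case
      by (simp add: lp_def lp_norm_def)
  next
    case (Suc N)
    then show ?case
      using lp_minkowski[of "\<lambda>n. \<Sum>j<N. f j n" s "f N"] s by fastforce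
  qed
  then show "(\<lambda>n. \<Sum>j<N. f j n) \<in> lp s"
    and "lp_norm s (\<lambda>n. \<Sum>j<N. f j n) \<le> (\<Sum>j<N. lp_norm s (f j))"
    by auto
qed

lemma lp_sum_disjoint:
  fixes f :: "nat \<Rightarrow> nat \<Rightarrow> complex"
  assumes f: "\<And>j. j < N \<Longrightarrow> f j \<in> lp s" and s: "0 < s"
    and disjoint: "\<And>n j k. j < N \<Longrightarrow> k < N \<Longrightarrow> j \<noteq> k \<Longrightarrow> f j n \<noteq> 0 \<Longrightarrow> f k n = 0"
  shows "(\<lambda>n. \<Sum>j<N. f j n) \<in> lp s"
    and "lp_norm s (\<lambda>n. \<Sum>j<N. f j n) = (\<Sum>j<N. lp_norm s (f j) powr s) powr (1 / s)"
proof -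
  have "norm (\<Sum>j<M. f j n) powr s = (\<Sum>j<M. norm (f j n) powr s)" if "M \<le> N" for M n
    using that
  proof (induction M)
    case (Suc M)
    then show ?case
      using disjoint[of M _ n] s by (cases "f M n = 0") auto
  qed (use s in simp)
  moreover have "(\<lambda>n. \<Sum>j<N. norm (f j n) powr s) sums (\<Sum>j<N. lp_norm s (f j) powr s)"
    using sums_sum[of "{..<N}" "\<lambda>j n. norm (f j n) powr s"] f lp_summable lp_norm_powr[OF f s]
    by (simp add: summable_sums)
  ultimately have "(\<lambda>n. norm (\<Sum>j<N. f j n) powr s) sums (\<Sum>j<N. lp_norm s (f j) powr s)"
    by simp
  then show "(\<lambda>n. \<Sum>j<N. f j n) \<in> lp s"
    and "lp_norm s (\<lambda>n. \<Sum>j<N. f j n) = (\<Sum>j<N. lp_norm s (f j) powr s) powr (1 / s)"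
    unfolding lp_def lp_norm_def by (auto simp: sums_iff)
qed

lemma lp_norm_sum_disjoint_bounds:
  fixes f :: "nat \<Rightarrow> nat \<Rightarrow> complex"
  assumes f: "\<And>j. j < N \<Longrightarrow> f j \<in> lp s" and s: "0 < s"
    and disjoint: "\<And>n j k. j < N \<Longrightarrow> k < N \<Longrightarrow> j \<noteq> k \<Longrightarrow> f j n \<noteq> 0 \<Longrightarrow> f k n = 0"
    and bounds: "\<And>j. j < N \<Longrightarrow> c \<le> lp_norm s (f j) \<and> lp_norm s (f j) \<le> C" and c: "0 \<le> c"
  shows "c * real N powr (1 / s) \<le> lp_norm s (\<lambda>n. \<Sum>j<N. f j n)"
    and "lp_norm s (\<lambda>n. \<Sum>j<N. f j n) \<le> C * real N powr (1 / s)"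
proof -
  have C: "0 \<le> C" if "0 < N"
    using bounds[of 0] that c by linarith
  have norm_sum: "lp_norm s (\<lambda>n. \<Sum>j<N. f j n) = (\<Sum>j<N. lp_norm s (f j) powr s) powr (1 / s)"
    by (rule lp_sum_disjoint(2)) (use f s disjoint in auto)
  also have "\<dots> \<le> (real N * C powr s) powr (1 / s)"
    using sum_mono[of "{..<N}" _ "\<lambda>_. C powr s"] bounds s lp_norm_nonneg
    by (intro powr_mono2) (auto intro: sum_nonneg simp: powr_mono2)
  also have "\<dots> = C * real N powr (1 / s)"
    using C s by (cases "N = 0") (simp_all add: powr_mult powr_powr)
  finally show "lp_norm s (\<lambda>n. \<Sum>j<N. f j n) \<le> C * real N powr (1 / s)" .
  have "real N * c powr s \<le> (\<Sum>j<N. lp_norm s (f j) powr s)"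
    using sum_mono[of "{..<N}" "\<lambda>_. c powr s"] bounds c s by (simp add: powr_mono2)
  then have "(real N * c powr s) powr (1 / s) \<le> (\<Sum>j<N. lp_norm s (f j) powr s) powr (1 / s)"
    using c s by (intro powr_mono2) auto
  then show "c * real N powr (1 / s) \<le> lp_norm s (\<lambda>n. \<Sum>j<N. f j n)"
    using c s by (simp add: norm_sum powr_mult powr_powr mult.commute)
qed

lemma disjoint_supports_if_intervals_ordered:
  fixes f :: "nat \<Rightarrow> nat \<Rightarrow> complex" and L U :: "nat \<Rightarrow> nat"
  assumes support: "\<And>j n. f j n \<noteq> 0 \<Longrightarrow> L j \<le> n \<and> n < U j"
    and ordered: "\<And>j k. j < k \<Longrightarrow> U j \<le> L k"
    and "j \<noteq> k" "f j n \<noteq> 0"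
  shows "f k n = 0"
proof (rule ccontr)
  assume "f k n \<noteq> 0"
  then have "L k \<le> n" "n < U k" "L j \<le> n" "n < U j"
    using support assms(4) by blast+
  moreover have "j < k \<or> k < j"
    using assms(3) by arith
  ultimately show False
    by (auto dest: ordered)
qed

lemma lp_tail_small:
  assumes "f \<in> lp s" "0 < e"
  obtains M where "m \<le> M" "(\<Sum>i. norm (f (i + M)) powr s) \<le> e"
proof -
  obtain N where "\<forall>n\<ge>N. norm (\<Sum>i. norm (f (i + n)) powr s) < e"
    using suminf_exist_split[OF assms(2) lp_summable[OF assms(1)]] by blast
  then have "norm (\<Sum>i. norm (f (i + max N m)) powr s) < e"
    by simp
  then show ?thesis
    by (intro that[of "max N m"]) auto
qed

definition block :: "nat \<Rightarrow> nat \<Rightarrow> (nat \<Rightarrow> complex) \<Rightarrow> nat \<Rightarrow> complex" where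
  "block lo hi f i = (if lo \<le> i \<and> i < hi then f i else 0)"

lemma lp_block: "f \<in> lp s \<Longrightarrow> 0 < s \<Longrightarrow> block lo hi f \<in> lp s"
  by (rule lp_norm_mono(1)) (auto simp: block_def)

lemma lp_norm_block_le: "f \<in> lp s \<Longrightarrow> 0 < s \<Longrightarrow> lp_norm s (block lo hi f) \<le> lp_norm s f"
  by (rule lp_norm_mono(2)) (auto simp: block_def)

lemma lp_norm_off_block_le:
  assumes f: "f \<in> lp s" and s: "0 < s" and "lo \<le> hi" "0 \<le> e"
    and small: "(\<Sum>i<lo. norm (f i) powr s) + (\<Sum>i. norm (f (i + hi)) powr s) \<le> e powr s"
  shows "lp_norm s (\<lambda>i. f i - block lo hi f i) \<le> e"
proof -
  define G where "G = (\<lambda>i. norm (f i - block lo hi f i) powr s)"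
  have G: "summable G"
    using lp_summable[OF lp_norm_mono(1)[OF f _ s]] unfolding G_def by (simp add: block_def)
  have "(\<Sum>i<hi. G i) = (\<Sum>i<lo. G i)"
    by (rule sum.mono_neutral_right) (use \<open>lo \<le> hi\<close> s in \<open>auto simp: G_def block_def\<close>)
  then have "suminf G = (\<Sum>i<lo. norm (f i) powr s) + (\<Sum>i. norm (f (i + hi)) powr s)"
    using suminf_split_initial_segment[OF G, of hi] by (simp add: G_def block_def)
  then have "suminf G \<le> e powr s"
    using small by simp
  moreover have "lp_norm s (\<lambda>i. f i - block lo hi f i) = suminf G powr (1 / s)"
    by (simp add: lp_norm_def G_def)
  ultimately have "lp_norm s (\<lambda>i. f i - block lo hi f i) \<le> (e powr s) powr (1 / s)"
    using s suminf_nonneg[OF G] by (auto intro: powr_mono2 simp: G_def)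
  also have "\<dots> = e"
    using s \<open>0 \<le> e\<close> by (simp add: powr_powr)
  finally show ?thesis .
qed

section \<open>Bounded operators on \<open>\<ell>\<^sup>p \<oplus> X'\<close>\<close>

lemma cscale_minus_one: "cscale (- 1) (y :: 'a::complex_banach) = - y"
  using cscale_of_real[of "- 1" y] by simp

lemma lp_norm_le_ds_norm: "lp_norm s f \<le> ds_norm s (f, y)"
  unfolding ds_norm_def using lp_norm_nonneg[of s f] by (simp add: real_le_rsqrt)

lemma norm_le_ds_norm: "norm y \<le> ds_norm s (f, y)"
  unfolding ds_norm_def by (simp add: real_le_rsqrt)

lemma ds_norm_le: "ds_norm s (f, y) \<le> lp_norm s f + norm y"
  unfolding ds_norm_def using lp_norm_nonneg[of s f] norm_ge_zero[of y]
  by (intro real_le_lsqrt) (auto simp: power2_eq_square algebra_simps)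

lemma ds_norm_zero_right: "ds_norm s (f, 0) = lp_norm s f"
  unfolding ds_norm_def using lp_norm_nonneg[of s f] by simp

lemma ds_bounded_op_zero:
  assumes "ds_bounded_op p q H"
  shows "H (\<lambda>_. 0, 0) = (\<lambda>_. 0, 0)"
proof -
  have zero: "ds_scale 0 u = (\<lambda>_. 0, 0)" for u :: "(nat \<Rightarrow> complex) \<times> 'c::complex_banach"
    using cscale_of_real[of 0 "snd u"] by (simp add: ds_scale_def)
  have "(\<lambda>_. 0, 0) \<in> ds_carrier p"
    by (simp add: ds_carrier_def lp_def)
  then have "H (ds_scale 0 (\<lambda>_. 0, 0)) = ds_scale 0 (H (\<lambda>_. 0, 0))"
    using assms unfolding ds_bounded_op_def by blast
  then show ?thesis
    by (simp only: zero)
qed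

lemma ds_bounded_op_diff:
  assumes H: "ds_bounded_op p q H" and "f \<in> lp p" "g \<in> lp p"
  shows "H (\<lambda>n. f n - g n, x - y)
    = (\<lambda>n. fst (H (f, x)) n - fst (H (g, y)) n, snd (H (f, x)) - snd (H (g, y)))"
proof -
  have "(f, x) \<in> ds_carrier p" "(g, y) \<in> ds_carrier p" "ds_scale (- 1) (g, y) \<in> ds_carrier p"
    using assms lp_uminus[of g p] by (auto simp: ds_carrier_def ds_scale_def)
  moreover from this H have "H (ds_scale (- 1) (g, y)) = ds_scale (- 1) (H (g, y))"
    unfolding ds_bounded_op_def by blast
  ultimately have "H (ds_add (f, x) (ds_scale (- 1) (g, y))) = ds_add (H (f, x)) (ds_scale (- 1) (H (g, y)))"
    using H unfolding ds_bounded_op_def by metis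
  then show ?thesis
    by (simp add: ds_add_def ds_scale_def cscale_minus_one)
qed

lemma ds_bounded_op_sum:
  fixes f :: "nat \<Rightarrow> nat \<Rightarrow> complex"
  assumes H: "ds_bounded_op p q H" and p: "1 \<le> p" and f: "\<And>j. j < N \<Longrightarrow> f j \<in> lp p"
  shows "H (\<lambda>n. \<Sum>j<N. f j n, 0) = (\<lambda>n. \<Sum>j<N. fst (H (f j, 0)) n, \<Sum>j<N. snd (H (f j, 0)))"
  using f
proof (induction N)
  case 0
  then show ?case
    using ds_bounded_op_zero[OF H] by simp
next
  case (Suc N)
  have "(\<lambda>n. \<Sum>j<N. f j n, 0) \<in> ds_carrier p" "(f N, 0) \<in> ds_carrier p"
    using lp_sum(1)[of N f p] Suc.prems p by (auto simp: ds_carrier_def)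
  then have "H (ds_add (\<lambda>n. \<Sum>j<N. f j n, 0) (f N, 0))
      = ds_add (H (\<lambda>n. \<Sum>j<N. f j n, 0)) (H (f N, 0))"
    using H unfolding ds_bounded_op_def by blast
  then show ?case
    using Suc by (simp add: ds_add_def)
qed

lemma ds_bounded_op_bound:
  assumes "ds_bounded_op p q H"
  obtains C where "0 < C" "\<And>u. u \<in> ds_carrier p \<Longrightarrow> ds_norm q (H u) \<le> C * ds_norm p u"
proof -
  obtain C where C: "\<forall>u\<in>ds_carrier p. ds_norm q (H u) \<le> C * ds_norm p u"
    using assms by (auto simp: ds_bounded_op_def)
  have "ds_norm q (H u) \<le> max C 1 * ds_norm p u" if "u \<in> ds_carrier p" for u
    using C that mult_right_mono[of C "max C 1" "ds_norm p u"] by (force simp: ds_norm_def)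
  then show ?thesis
    using that[of "max C 1"] by auto
qed

lemma ds_bounded_below_if_left_inverse:
  assumes F: "ds_bounded_op p q F" and G: "ds_bounded_op q p G"
    and inverse: "\<And>u. u \<in> ds_carrier p \<Longrightarrow> G (F u) = u"
  obtains C where "0 < C" "\<And>u. u \<in> ds_carrier p \<Longrightarrow> ds_norm p u \<le> C * ds_norm q (F u)"
proof -
  obtain C where "0 < C" and C: "\<And>v. v \<in> ds_carrier q \<Longrightarrow> ds_norm p (G v) \<le> C * ds_norm q v"
    using ds_bounded_op_bound[OF G] by blast
  moreover have "F u \<in> ds_carrier q" if "u \<in> ds_carrier p" for u
    using F that by (simp add: ds_bounded_op_def)
  ultimately show ?thesis
    using that[of C] C inverse by fastforce
qed

lemma ds_bounded_op_snd_Lipschitz: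
  assumes H: "ds_bounded_op p q H" and p: "1 \<le> p"
  obtains K where "\<And>f g. f \<in> lp p \<Longrightarrow> g \<in> lp p \<Longrightarrow>
    norm (snd (H (f, 0)) - snd (H (g, 0))) \<le> K * lp_norm p (\<lambda>n. f n - g n)"
proof -
  obtain K where K: "\<And>u. u \<in> ds_carrier p \<Longrightarrow> ds_norm q (H u) \<le> K * ds_norm p u"
    using ds_bounded_op_bound[OF H] by blast
  have "norm (snd (H (f, 0)) - snd (H (g, 0))) \<le> K * lp_norm p (\<lambda>n. f n - g n)"
    if "f \<in> lp p" "g \<in> lp p" for f g
  proof -
    have "norm (snd (H (f, 0)) - snd (H (g, 0))) = norm (snd (H (\<lambda>n. f n - g n, 0 - 0)))"
      using ds_bounded_op_diff[OF H that, of 0 0] by simp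
    also have "\<dots> \<le> ds_norm q (H (\<lambda>n. f n - g n, 0))"
      using norm_le_ds_norm[of _ q] by (metis diff_self prod.collapse)
    also have "\<dots> \<le> K * lp_norm p (\<lambda>n. f n - g n)"
      using K[of "(\<lambda>n. f n - g n, 0)"] lp_diff(1)[OF that p]
      by (simp add: ds_carrier_def ds_norm_zero_right)
    finally show ?thesis .
  qed
  then show ?thesis
    using that by blast
qed

section \<open>Compact operators\<close>

lemma Cauchy_if_Lipschitz_in_lp_convergent:
  fixes \<psi> :: "nat \<Rightarrow> 'a::real_normed_vector"
  assumes y: "\<And>k. y k \<in> lp p" and g: "g \<in> lp p" and p: "1 \<le> p"
    and lim: "(\<lambda>k. lp_norm p (\<lambda>n. y k n - g n)) \<longlonglongrightarrow> 0"
    and Lipschitz: "\<And>k l. norm (\<psi> k - \<psi> l) \<le> K * lp_norm p (\<lambda>n. y k n - y l n)"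
  shows "Cauchy \<psi>"
proof (rule CauchyI)
  fix e :: real
  assume "0 < e"
  define K' where "K' = max K 1"
  have K': "0 < K'"
    by (simp add: K'_def)
  with \<open>0 < e\<close> have "0 < e / (2 * K')"
    by simp
  from lim[unfolded LIMSEQ_iff, rule_format, OF this] obtain M
    where "\<forall>k\<ge>M. norm (lp_norm p (\<lambda>n. y k n - g n) - 0) < e / (2 * K')"
    by blast
  then have M: "lp_norm p (\<lambda>n. y k n - g n) < e / (2 * K')" if "M \<le> k" for k
    using that lp_norm_nonneg by auto
  have "norm (\<psi> k - \<psi> l) < e" if "M \<le> k" "M \<le> l" for k l
  proof -
    have "lp_norm p (\<lambda>n. y k n - y l n) = lp_norm p (\<lambda>n. (y k n - g n) - (y l n - g n))"
      by simp
    also have "\<dots> \<le> lp_norm p (\<lambda>n. y k n - g n) + lp_norm p (\<lambda>n. y l n - g n)"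
      by (rule lp_diff(2)[OF lp_diff(1)[OF y g p] lp_diff(1)[OF y g p] p])
    also have "\<dots> < e / K'"
      using M[OF that(1)] M[OF that(2)] by simp
    finally have "K' * lp_norm p (\<lambda>n. y k n - y l n) < e"
      using K' by (simp add: pos_less_divide_eq mult.commute)
    moreover have "K * lp_norm p (\<lambda>n. y k n - y l n) \<le> K' * lp_norm p (\<lambda>n. y k n - y l n)"
      by (rule mult_right_mono) (simp_all add: K'_def lp_norm_nonneg)
    ultimately show ?thesis
      using Lipschitz[of k l] by linarith
  qed
  then show "\<exists>M. \<forall>k\<ge>M. \<forall>l\<ge>M. norm (\<psi> k - \<psi> l) < e"
    by blast
qed

lemma lp_compact_op_Cauchy_subseq:
  fixes \<phi> :: "(nat \<Rightarrow> complex) \<Rightarrow> 'a::real_normed_vector" and x :: "nat \<Rightarrow> nat \<Rightarrow> complex"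
  assumes T: "lp_compact_op p T" and p: "1 \<le> p"
    and x: "\<And>k. x k \<in> lp p" "\<And>k. lp_norm p (x k) \<le> B"
    and Lipschitz: "\<And>e e'. e \<in> lp p \<Longrightarrow> e' \<in> lp p \<Longrightarrow>
      norm (\<phi> e - \<phi> e') \<le> K * lp_norm p (\<lambda>n. T e n - T e' n)"
  obtains r where "strict_mono r" "Cauchy (\<lambda>k. \<phi> (x (r k)))"
proof -
  obtain r g where r: "strict_mono r" and g: "g \<in> lp p"
    and lim: "(\<lambda>k. lp_norm p (\<lambda>n. T (x (r k)) n - g n)) \<longlonglongrightarrow> 0"
    using T x unfolding lp_compact_op_def by blast
  have "T (x k) \<in> lp p" for k
    using T x(1) unfolding lp_compact_op_def lp_bounded_op_def by blast
  then have "Cauchy (\<lambda>k. \<phi> (x (r k)))"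
    using g p lim Lipschitz[OF x(1) x(1)] by (intro Cauchy_if_Lipschitz_in_lp_convergent)
  then show ?thesis
    using that r by blast
qed

section \<open>The gliding hump\<close>

locale gliding_hump =
  fixes p q :: real
    and F :: "(nat \<Rightarrow> complex) \<times> 'x::complex_banach \<Rightarrow> (nat \<Rightarrow> complex) \<times> 'y::complex_banach"
    and CF CG :: real and r :: "nat \<Rightarrow> nat"
  assumes p: "1 \<le> p" and q: "1 \<le> q"
    and F: "ds_bounded_op p q F"
    and F_upper: "0 < CF" "\<And>u. u \<in> ds_carrier p \<Longrightarrow> ds_norm q (F u) \<le> CF * ds_norm p u"
    and F_lower: "0 < CG" "\<And>u. u \<in> ds_carrier p \<Longrightarrow> ds_norm p u \<le> CG * ds_norm q (F u)"
    and r: "strict_mono r"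
    and Cauchy_snd: "Cauchy (\<lambda>k. snd (F (lp_unit (r k), 0)))"
begin

definition z :: "nat \<Rightarrow> nat \<Rightarrow> complex" where
  "z k = fst (F (lp_unit (r k), 0))"

definition \<phi> :: "nat \<Rightarrow> 'y" where
  "\<phi> k = snd (F (lp_unit (r k), 0))"

lemma lp_unit_p: "lp_unit k \<in> lp p" "lp_norm p (lp_unit k) = 1"
  using lp_unit[of p k] p by auto

lemma lp_unit_in_carrier: "(lp_unit k, 0 :: 'x) \<in> ds_carrier p"
  using lp_unit_p(1) by (simp add: ds_carrier_def)

lemma z_in_lp: "z k \<in> lp q"
proof -
  have "F (lp_unit (r k), 0) \<in> ds_carrier q"
    using F lp_unit_in_carrier unfolding ds_bounded_op_def by blast
  then show ?thesis
    by (simp add: z_def ds_carrier_def mem_Times_iff)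
qed

lemma norm_z_le: "norm (z k i) \<le> CF"
proof -
  have "norm (z k i) \<le> lp_norm q (z k)"
    using norm_le_lp_norm[OF z_in_lp] q by simp
  also have "\<dots> \<le> ds_norm q (F (lp_unit (r k), 0))"
    using lp_norm_le_ds_norm[of q "z k" "\<phi> k"] by (simp add: z_def \<phi>_def)
  also have "\<dots> \<le> CF * ds_norm p (lp_unit (r k), 0 :: 'x)"
    by (rule F_upper(2)[OF lp_unit_in_carrier])
  also have "\<dots> = CF"
    by (simp add: ds_norm_zero_right lp_unit_p)
  finally show ?thesis .
qed

lemma F_lp_unit_diff:
  "F (\<lambda>n. lp_unit (r a) n - lp_unit (r b) n, 0) = (\<lambda>i. z a i - z b i, \<phi> a - \<phi> b)"
  using ds_bounded_op_diff[OF F lp_unit_p(1) lp_unit_p(1), of "r a" "r b" 0 0]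
  by (simp add: z_def \<phi>_def)

text \<open>Bolzano--Weierstrass on the first \<open>m\<close> coordinates of the bounded \<open>z\<close>, combined with the
  Cauchy property of \<open>\<phi>\<close>.\<close>

lemma pair_close:
  assumes "0 < e"
  obtains a b where "L \<le> a" "a < b" "norm (\<phi> a - \<phi> b) \<le> e"
    "(\<Sum>i<m. norm (z a i - z b i) powr q) \<le> e"
proof -
  obtain \<sigma> where \<sigma>: "strict_mono \<sigma>" and conv: "\<And>i. i < m \<Longrightarrow> convergent (\<lambda>k. z (\<sigma> k) i)"
    using bounded_imp_coordinatewise_convergent_subseq[of z CF] norm_z_le by blast
  define \<delta> where "\<delta> = (e / (m + 1)) powr (1 / q)"
  have "0 < \<delta>"
    using assms by (simp add: \<delta>_def)
  obtain K1 where K1: "\<And>i a b. i < m \<Longrightarrow> K1 \<le> a \<Longrightarrow> K1 \<le> b \<Longrightarrow> norm (z (\<sigma> a) i - z (\<sigma> b) i) < \<delta>"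
    using Cauchy_uniform_finite[of m "\<lambda>k. z (\<sigma> k)" \<delta>] conv convergent_Cauchy \<open>0 < \<delta>\<close> by blast
  obtain M where M: "\<And>a b. M \<le> a \<Longrightarrow> M \<le> b \<Longrightarrow> norm (\<phi> a - \<phi> b) < e"
    using CauchyD[OF Cauchy_snd \<open>0 < e\<close>] unfolding \<phi>_def by blast
  define K where "K = max K1 (max L M)"
  have K_ge: "K1 \<le> K" "L \<le> K" "M \<le> K"
    by (simp_all add: K_def)
  have K: "K \<le> \<sigma> K" "\<sigma> K < \<sigma> (Suc K)"
    using seq_suble[OF \<sigma>] strict_monoD[OF \<sigma>] by auto
  have "norm (z (\<sigma> K) i - z (\<sigma> (Suc K)) i) powr q \<le> e / (m + 1)" if "i < m" for i
  proof -
    have "norm (z (\<sigma> K) i - z (\<sigma> (Suc K)) i) powr q \<le> \<delta> powr q"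
      using K1[OF that K_ge(1) le_SucI[OF K_ge(1)]] q by (intro powr_mono2) auto
    also have "\<dots> = e / (m + 1)"
      using assms q by (simp add: \<delta>_def powr_powr)
    finally show ?thesis .
  qed
  then have "(\<Sum>i<m. norm (z (\<sigma> K) i - z (\<sigma> (Suc K)) i) powr q) \<le> real (card {..<m}) * (e / (m + 1))"
    by (intro sum_bounded_above) simp
  also have "\<dots> \<le> e"
    using assms by (simp add: field_simps)
  finally have "(\<Sum>i<m. norm (z (\<sigma> K) i - z (\<sigma> (Suc K)) i) powr q) \<le> e" .
  moreover have "norm (\<phi> (\<sigma> K) - \<phi> (\<sigma> (Suc K))) \<le> e"
    using M[of "\<sigma> K" "\<sigma> (Suc K)"] K K_ge by simp
  moreover have "L \<le> \<sigma> K"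
    using K K_ge by simp
  ultimately show ?thesis
    using that K(2) by blast
qed

lemma block_close:
  assumes "0 < e"
  obtains a b lo hi where "L \<le> a" "a < b" "m \<le> lo" "lo \<le> hi" "norm (\<phi> a - \<phi> b) \<le> e"
    "lp_norm q (\<lambda>i. (z a i - z b i) - block lo hi (\<lambda>i. z a i - z b i) i) \<le> e"
proof -
  have "0 < min e (e powr q / 2)"
    using assms by simp
  then obtain a b where ab: "L \<le> a" "a < b" "norm (\<phi> a - \<phi> b) \<le> min e (e powr q / 2)"
    "(\<Sum>i<m. norm (z a i - z b i) powr q) \<le> min e (e powr q / 2)"
    using pair_close by blast
  have diff: "(\<lambda>i. z a i - z b i) \<in> lp q"
    using lp_diff(1)[OF z_in_lp z_in_lp q] .
  obtain hi where hi: "m \<le> hi" "(\<Sum>i. norm (z a (i + hi) - z b (i + hi)) powr q) \<le> e powr q / 2"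
    using lp_tail_small[OF diff, of "e powr q / 2"] assms by auto
  have "lp_norm q (\<lambda>i. (z a i - z b i) - block m hi (\<lambda>i. z a i - z b i) i) \<le> e"
    using ab(4) hi q assms by (intro lp_norm_off_block_le[OF diff]) auto
  then show ?thesis
    using that[of a b m hi] ab hi by simp
qed

text \<open>Tolerances for the \<open>n\<close>-th hump: they sum to at most \<open>1\<close>, and twice the \<open>n\<close>-th one is
  at most half of the lower bound \<open>c0\<close> for \<open>F\<close> on differences of two unit vectors.\<close>

definition c0 :: real where
  "c0 = 2 powr (1 / p) / CG"

definition tol :: "nat \<Rightarrow> real" where
  "tol n = min 1 (c0 / 2) * (1 / 2) ^ Suc n"

lemma c0_pos: "0 < c0"
  using F_lower(1) by (simp add: c0_def)

lemma tol_pos: "0 < tol n"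
  using c0_pos by (simp add: tol_def)

lemma twice_tol_le: "2 * tol n \<le> min 1 (c0 / 2)"
proof -
  have "2 * tol n = min 1 (c0 / 2) * (1 / 2) ^ n"
    by (simp add: tol_def)
  also have "\<dots> \<le> min 1 (c0 / 2) * 1"
    using c0_pos by (intro mult_left_mono power_le_one) auto
  finally show ?thesis
    by simp
qed

lemma blocks_exist:
  obtains a b lo hi :: "nat \<Rightarrow> nat"
  where "\<And>n. a n < b n" "\<And>n. b n < a (Suc n)" "\<And>n. lo n \<le> hi n" "\<And>n. hi n \<le> lo (Suc n)"
    "\<And>n. norm (\<phi> (a n) - \<phi> (b n)) \<le> tol n"
    "\<And>n. lp_norm q (\<lambda>i. (z (a n) i - z (b n) i) - block (lo n) (hi n) (\<lambda>i. z (a n) i - z (b n) i) i) \<le> tol n"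
proof -
  define P :: "nat \<Rightarrow> nat \<times> nat \<times> nat \<times> nat \<Rightarrow> bool"
    where "P n = (\<lambda>(a, b, lo, hi). a < b \<and> lo \<le> hi \<and> norm (\<phi> a - \<phi> b) \<le> tol n \<and>
      lp_norm q (\<lambda>i. (z a i - z b i) - block lo hi (\<lambda>i. z a i - z b i) i) \<le> tol n)" for n
  define Q :: "nat \<times> nat \<times> nat \<times> nat \<Rightarrow> nat \<times> nat \<times> nat \<times> nat \<Rightarrow> bool"
    where "Q = (\<lambda>(a, b, lo, hi) (a', b', lo', hi'). b < a' \<and> hi \<le> lo')"
  have "\<exists>y. P n y \<and> Q x y" for n x
  proof -
    obtain a0 b0 lo0 hi0 where x: "x = (a0, b0, lo0, hi0)"
      by (cases x) blast
    obtain a b lo hi where "Suc b0 \<le> a" "a < b" "hi0 \<le> lo" "lo \<le> hi" "norm (\<phi> a - \<phi> b) \<le> tol n"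
      "lp_norm q (\<lambda>i. (z a i - z b i) - block lo hi (\<lambda>i. z a i - z b i) i) \<le> tol n"
      using block_close[OF tol_pos, where L = "Suc b0" and m = hi0] by blast
    then show ?thesis
      unfolding x P_def Q_def by (intro exI[of _ "(a, b, lo, hi)"]) auto
  qed
  then obtain f where f: "\<And>n. P n (f n) \<and> Q (f n) (f (Suc n))"
    using dependent_nat_choice[of P "\<lambda>_. Q"] by blast
  define a b lo hi where "a n = fst (f n)" and "b n = fst (snd (f n))"
    and "lo n = fst (snd (snd (f n)))" and "hi n = snd (snd (snd (f n)))" for n
  have f_eq: "f n = (a n, b n, lo n, hi n)" for n
    by (simp add: a_def b_def lo_def hi_def)
  show ?thesis
    by (rule that[of a b lo hi]) (use f in \<open>auto simp: f_eq P_def Q_def\<close>)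
qed

context
  fixes a b lo hi :: "nat \<Rightarrow> nat"
  assumes a_less_b: "a n < b n" and b_less_a_Suc: "b n < a (Suc n)"
    and lo_le_hi: "lo n \<le> hi n" and hi_le_lo_Suc: "hi n \<le> lo (Suc n)"
    and snd_close: "norm (\<phi> (a n) - \<phi> (b n)) \<le> tol n"
    and off_block_small:
      "lp_norm q (\<lambda>i. (z (a n) i - z (b n) i) - block (lo n) (hi n) (\<lambda>i. z (a n) i - z (b n) i) i) \<le> tol n"
begin

definition D :: "nat \<Rightarrow> nat \<Rightarrow> complex" where
  "D j = (\<lambda>n. lp_unit (r (a j)) n - lp_unit (r (b j)) n)"

definition W :: "nat \<Rightarrow> nat \<Rightarrow> complex" where
  "W j = (\<lambda>i. z (a j) i - z (b j) i)"

definition V :: "nat \<Rightarrow> 'y" where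
  "V j = \<phi> (a j) - \<phi> (b j)"

definition \<beta> :: "nat \<Rightarrow> nat \<Rightarrow> complex" where
  "\<beta> j = block (lo j) (hi j) (W j)"

definition \<epsilon> :: "nat \<Rightarrow> nat \<Rightarrow> complex" where
  "\<epsilon> j = (\<lambda>i. W j i - \<beta> j i)"

definition C1 :: real where
  "C1 = CF * 2 powr (1 / p)"

lemma blocks_ordered: "j < k \<Longrightarrow> b j < a k \<and> hi j \<le> lo k"
proof (induction k)
  case (Suc k)
  then show ?case
    using a_less_b[of k] b_less_a_Suc[of k] lo_le_hi[of k] hi_le_lo_Suc[of k]
    by (cases "j = k") auto
qed simp

lemma r_blocks_ordered: "r (a j) < r (b j)" "j < k \<Longrightarrow> r (b j) < r (a k)"
  using strict_monoD[OF r] a_less_b blocks_ordered by auto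

lemma D_in_lp: "D j \<in> lp p" and lp_norm_D: "lp_norm p (D j) = 2 powr (1 / p)"
  using lp_indicator[of "{r (a j), r (b j)}" "D j" p] r_blocks_ordered(1)[of j] p
  by (auto simp: D_def lp_unit_def)

lemma D_disjoint: "j \<noteq> k \<Longrightarrow> D j n \<noteq> 0 \<Longrightarrow> D k n = 0"
proof (rule disjoint_supports_if_intervals_ordered[of D "\<lambda>j. r (a j)" "\<lambda>j. Suc (r (b j))"])
  show "r (a j) \<le> n \<and> n < Suc (r (b j))" if "D j n \<noteq> 0" for j n
    using that r_blocks_ordered(1)[of j] by (auto simp: D_def lp_unit_def split: if_splits)
  show "Suc (r (b j)) \<le> r (a k)" if "j < k" for j k
    using r_blocks_ordered(2)[OF that] by simp
qed

lemma F_D: "F (D j, 0) = (W j, V j)"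
  using F_lp_unit_diff by (simp add: D_def W_def V_def)

lemma W_in_lp: "W j \<in> lp q"
  using lp_diff(1)[OF z_in_lp z_in_lp q] by (simp add: W_def)

lemma \<beta>_in_lp: "\<beta> j \<in> lp q"
  using lp_block[OF W_in_lp] q by (simp add: \<beta>_def)

lemma \<epsilon>_in_lp: "\<epsilon> j \<in> lp q"
  using lp_diff(1)[OF W_in_lp \<beta>_in_lp q] by (simp add: \<epsilon>_def)

lemma \<beta>_disjoint: "j \<noteq> k \<Longrightarrow> \<beta> j n \<noteq> 0 \<Longrightarrow> \<beta> k n = 0"
  by (rule disjoint_supports_if_intervals_ordered[of \<beta> lo hi])
    (use blocks_ordered in \<open>auto simp: \<beta>_def block_def split: if_splits\<close>)

lemma sum_tol_le: "(\<Sum>j<N. tol j) \<le> min 1 (c0 / 2)"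
proof -
  have "(\<Sum>j<N. tol j) = min 1 (c0 / 2) * (\<Sum>j<N. (1 / 2) ^ Suc j)"
    by (simp add: tol_def sum_distrib_left)
  also have "\<dots> \<le> min 1 (c0 / 2) * 1"
    using c0_pos by (intro mult_left_mono sum_half_powers_le_1) auto
  finally show ?thesis
    by simp
qed

lemma \<beta>_bounds: "c0 / 2 \<le> lp_norm q (\<beta> j)" "lp_norm q (\<beta> j) \<le> C1"
proof -
  have norm_D: "ds_norm p (D j, 0 :: 'x) = 2 powr (1 / p)"
    by (simp add: ds_norm_zero_right lp_norm_D)
  have D_carrier: "(D j, 0 :: 'x) \<in> ds_carrier p"
    using D_in_lp by (simp add: ds_carrier_def)
  have "c0 \<le> ds_norm q (W j, V j)"
    using F_lower(2)[OF D_carrier] F_lower(1) unfolding F_D norm_D by (simp add: c0_def field_simps)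
  also have "\<dots> \<le> lp_norm q (W j) + norm (V j)"
    by (rule ds_norm_le)
  finally have "c0 \<le> lp_norm q (W j) + norm (V j)" .
  moreover have "lp_norm q (W j) \<le> lp_norm q (\<beta> j) + lp_norm q (\<epsilon> j)"
    using lp_minkowski(2)[OF \<beta>_in_lp[of j] \<epsilon>_in_lp[of j] q] by (simp add: \<epsilon>_def)
  moreover have "lp_norm q (\<epsilon> j) + norm (V j) \<le> 2 * tol j"
    using off_block_small[of j] snd_close[of j] by (simp add: \<epsilon>_def \<beta>_def W_def V_def)
  moreover have "2 * tol j \<le> min 1 (c0 / 2)"
    by (rule twice_tol_le)
  ultimately show "c0 / 2 \<le> lp_norm q (\<beta> j)"
    by linarith
  have "lp_norm q (\<beta> j) \<le> lp_norm q (W j)"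
    using lp_norm_block_le[OF W_in_lp] q by (simp add: \<beta>_def)
  also have "\<dots> \<le> ds_norm q (F (D j, 0))"
    unfolding F_D by (rule lp_norm_le_ds_norm)
  also have "\<dots> \<le> C1"
    using F_upper(2)[OF D_carrier] by (simp add: norm_D C1_def)
  finally show "lp_norm q (\<beta> j) \<le> C1" .
qed

lemma F_sum_D: "F (\<lambda>n. \<Sum>j<N. D j n, 0) = (\<lambda>i. \<Sum>j<N. W j i, \<Sum>j<N. V j)"
  using ds_bounded_op_sum[OF F p, of N D] D_in_lp by (simp add: F_D)

lemma sum_D: "(\<lambda>n. \<Sum>j<N. D j n) \<in> lp p"
  "lp_norm p (\<lambda>n. \<Sum>j<N. D j n) = 2 powr (1 / p) * real N powr (1 / p)"
proof -
  note bounds = lp_norm_sum_disjoint_bounds[of N D p "2 powr (1 / p)" "2 powr (1 / p)"]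
  have "2 powr (1 / p) * real N powr (1 / p) \<le> lp_norm p (\<lambda>n. \<Sum>j<N. D j n)"
    by (rule bounds(1)) (use D_in_lp lp_norm_D D_disjoint p in auto)
  moreover have "lp_norm p (\<lambda>n. \<Sum>j<N. D j n) \<le> 2 powr (1 / p) * real N powr (1 / p)"
    by (rule bounds(2)) (use D_in_lp lp_norm_D D_disjoint p in auto)
  ultimately show "lp_norm p (\<lambda>n. \<Sum>j<N. D j n) = 2 powr (1 / p) * real N powr (1 / p)"
    by (rule antisym[rotated])
  show "(\<lambda>n. \<Sum>j<N. D j n) \<in> lp p"
    using lp_sum(1)[of N D p] D_in_lp p by blast
qed

lemma sum_\<beta>: "(\<lambda>n. \<Sum>j<N. \<beta> j n) \<in> lp q"
  "c0 / 2 * real N powr (1 / q) \<le> lp_norm q (\<lambda>n. \<Sum>j<N. \<beta> j n)"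
  "lp_norm q (\<lambda>n. \<Sum>j<N. \<beta> j n) \<le> C1 * real N powr (1 / q)"
  using lp_sum(1)[of N \<beta> q] lp_norm_sum_disjoint_bounds[of N \<beta> q "c0 / 2" C1]
    \<beta>_in_lp \<beta>_disjoint \<beta>_bounds c0_pos q by auto

lemma sum_\<epsilon>: "(\<lambda>n. \<Sum>j<N. \<epsilon> j n) \<in> lp q" "lp_norm q (\<lambda>n. \<Sum>j<N. \<epsilon> j n) \<le> 1"
proof -
  show "(\<lambda>n. \<Sum>j<N. \<epsilon> j n) \<in> lp q"
    using lp_sum(1)[of N \<epsilon> q] \<epsilon>_in_lp q by blast
  have "lp_norm q (\<lambda>n. \<Sum>j<N. \<epsilon> j n) \<le> (\<Sum>j<N. lp_norm q (\<epsilon> j))"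
    using lp_sum(2)[of N \<epsilon> q] \<epsilon>_in_lp q by blast
  also have "\<dots> \<le> (\<Sum>j<N. tol j)"
    using off_block_small by (intro sum_mono) (simp add: \<epsilon>_def \<beta>_def W_def)
  also have "\<dots> \<le> 1"
    using sum_tol_le[of N] by simp
  finally show "lp_norm q (\<lambda>n. \<Sum>j<N. \<epsilon> j n) \<le> 1" .
qed

lemma norm_sum_V_le: "norm (\<Sum>j<N. V j) \<le> 1"
proof -
  have "norm (\<Sum>j<N. V j) \<le> (\<Sum>j<N. tol j)"
    using norm_sum[of V "{..<N}"] sum_mono[of "{..<N}" "\<lambda>j. norm (V j)" tol] snd_close
    by (simp add: V_def)
  also have "\<dots> \<le> 1"
    using sum_tol_le[of N] by simp
  finally show ?thesis .
qed

text \<open>Up to the small errors \<open>\<epsilon>\<close> and \<open>V\<close>, \<open>F\<close> maps the sum of the first \<open>N\<close> differences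
  \<open>D j\<close> to the sum of the disjoint humps \<open>\<beta> j\<close>: the left side grows like \<open>N powr (1 / p)\<close>,
  the right side like \<open>N powr (1 / q)\<close>.\<close>

lemma growth_bounds:
  "c0 * real N powr (1 / p) \<le> C1 * real N powr (1 / q) + 2"
  "c0 / 2 * real N powr (1 / q) \<le> C1 * real N powr (1 / p) + 1"
proof -
  define SD SW S\<beta> S\<epsilon> where "SD = (\<lambda>n. \<Sum>j<N. D j n)" and "SW = (\<lambda>i. \<Sum>j<N. W j i)"
    and "S\<beta> = (\<lambda>i. \<Sum>j<N. \<beta> j i)" and "S\<epsilon> = (\<lambda>i. \<Sum>j<N. \<epsilon> j i)"
  have SW: "SW = (\<lambda>i. S\<beta> i + S\<epsilon> i)"
    by (simp add: SW_def S\<beta>_def S\<epsilon>_def \<epsilon>_def sum.distrib[symmetric])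
  have SD_carrier: "(SD, 0 :: 'x) \<in> ds_carrier p"
    using sum_D(1) by (simp add: SD_def ds_carrier_def)
  have F_SD: "F (SD, 0) = (SW, \<Sum>j<N. V j)"
    using F_sum_D by (simp add: SD_def SW_def)
  have norm_SD: "ds_norm p (SD, 0 :: 'x) = 2 powr (1 / p) * real N powr (1 / p)"
    using sum_D(2) by (simp add: SD_def ds_norm_zero_right)
  have "c0 * real N powr (1 / p) \<le> ds_norm q (F (SD, 0))"
    using F_lower(2)[OF SD_carrier] F_lower(1) unfolding norm_SD by (simp add: c0_def field_simps)
  also have "\<dots> \<le> lp_norm q SW + norm (\<Sum>j<N. V j)"
    unfolding F_SD by (rule ds_norm_le)
  also have "\<dots> \<le> lp_norm q S\<beta> + lp_norm q S\<epsilon> + 1"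
    using lp_minkowski(2)[OF sum_\<beta>(1)[of N] sum_\<epsilon>(1)[of N] q] norm_sum_V_le[of N]
    by (simp add: SW S\<beta>_def S\<epsilon>_def)
  also have "\<dots> \<le> C1 * real N powr (1 / q) + 2"
    using sum_\<beta>(3)[of N] sum_\<epsilon>(2)[of N] by (simp add: S\<beta>_def S\<epsilon>_def)
  finally show "c0 * real N powr (1 / p) \<le> C1 * real N powr (1 / q) + 2" .
  have "c0 / 2 * real N powr (1 / q) \<le> lp_norm q S\<beta>"
    using sum_\<beta>(2) by (simp add: S\<beta>_def)
  also have "\<dots> \<le> lp_norm q SW + lp_norm q S\<epsilon>"
    using lp_diff(2)[of SW q S\<epsilon>] lp_minkowski(1)[OF sum_\<beta>(1)[of N] sum_\<epsilon>(1)[of N] q] sum_\<epsilon>(1)[of N] q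
    by (simp add: SW S\<beta>_def S\<epsilon>_def)
  also have "\<dots> \<le> ds_norm q (F (SD, 0)) + 1"
    using lp_norm_le_ds_norm[of q SW "\<Sum>j<N. V j"] sum_\<epsilon>(2)[of N] by (simp add: F_SD S\<epsilon>_def)
  also have "\<dots> \<le> C1 * real N powr (1 / p) + 1"
    using F_upper(2)[OF SD_carrier] unfolding norm_SD by (simp add: C1_def mult.assoc)
  finally show "c0 / 2 * real N powr (1 / q) \<le> C1 * real N powr (1 / p) + 1" .
qed

lemma blocks_imp_exponents_eq: "p = q"
proof (rule ccontr)
  assume "p \<noteq> q"
  have "0 \<le> C1"
    using F_upper(1) by (simp add: C1_def)
  consider "1 / q < 1 / p" | "1 / p < 1 / q"
    using \<open>p \<noteq> q\<close> p q by (metis divide_cancel_left linorder_neqE_linordered_idom zero_neq_one)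
  then show False
  proof cases
    case 1
    then obtain N :: nat where "C1 * real N powr (1 / q) + 2 < c0 * real N powr (1 / p)"
      using larger_powr_dominates[of "1 / q" "1 / p" c0 C1 2] c0_pos \<open>0 \<le> C1\<close> q by auto
    then show False
      using growth_bounds(1)[of N] by linarith
  next
    case 2
    then obtain N :: nat where "C1 * real N powr (1 / p) + 1 < c0 / 2 * real N powr (1 / q)"
      using larger_powr_dominates[of "1 / p" "1 / q" "c0 / 2" C1 1] c0_pos \<open>0 \<le> C1\<close> p by auto
    then show False
      using growth_bounds(2)[of N] by linarith
  qed
qed

end

theorem exponents_eq: "p = q"
  by (rule blocks_exist) (rule blocks_imp_exponents_eq)

end

section \<open>Equivalence after extension\<close>

lemma compact_snd_factor_imp_exponents_eq:
  fixes F H :: "(nat \<Rightarrow> complex) \<times> 'x::complex_banach \<Rightarrow> (nat \<Rightarrow> complex) \<times> 'y::complex_banach"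
    and G :: "(nat \<Rightarrow> complex) \<times> 'y \<Rightarrow> (nat \<Rightarrow> complex) \<times> 'x"
  assumes p: "1 \<le> p" and q: "1 \<le> q" and T: "lp_compact_op p T"
    and F: "ds_bounded_op p q F" and G: "ds_bounded_op q p G"
    and left_inverse: "\<And>u. u \<in> ds_carrier p \<Longrightarrow> G (F u) = u"
    and H: "ds_bounded_op p q H" and factor: "\<And>e. e \<in> lp p \<Longrightarrow> snd (F (e, 0)) = snd (H (T e, 0))"
  shows "p = q"
proof -
  obtain K where K: "\<And>f g. f \<in> lp p \<Longrightarrow> g \<in> lp p \<Longrightarrow>
      norm (snd (H (f, 0)) - snd (H (g, 0))) \<le> K * lp_norm p (\<lambda>n. f n - g n)"
    using ds_bounded_op_snd_Lipschitz[OF H p] by blast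
  have "T e \<in> lp p" if "e \<in> lp p" for e
    using T that unfolding lp_compact_op_def lp_bounded_op_def by blast
  then have "norm (snd (F (e, 0)) - snd (F (e', 0))) \<le> K * lp_norm p (\<lambda>n. T e n - T e' n)"
    if "e \<in> lp p" "e' \<in> lp p" for e e'
    using K factor that by simp
  moreover have "lp_unit k \<in> lp p" "lp_norm p (lp_unit k) \<le> 1" for k
    using lp_unit[of p k] p by auto
  ultimately obtain r where r: "strict_mono r" "Cauchy (\<lambda>k. snd (F (lp_unit (r k), 0)))"
    using lp_compact_op_Cauchy_subseq[OF T p, of lp_unit 1 "\<lambda>e. snd (F (e, 0))" K] by blast
  obtain CF where CF: "0 < CF" "\<And>u. u \<in> ds_carrier p \<Longrightarrow> ds_norm q (F u) \<le> CF * ds_norm p u"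
    using ds_bounded_op_bound[OF F] by blast
  obtain CG where CG: "0 < CG" "\<And>u. u \<in> ds_carrier p \<Longrightarrow> ds_norm p u \<le> CG * ds_norm q (F u)"
    using ds_bounded_below_if_left_inverse[OF F G left_inverse] by blast
  interpret gliding_hump p q F CF CG r
    using p q F CF CG r by unfold_locales
  show ?thesis
    by (rule exponents_eq)
qed

lemma eae_witness_snd_factor_left:
  assumes W: "eae_witness p q T S E F" and S: "lp_bounded_op q q S"
    and GE: "\<And>v. v \<in> ds_carrier q \<Longrightarrow> GE (E v) = v" and e: "e \<in> lp p"
  shows "snd (F (e, 0)) = snd (GE (T e, 0))"
proof -
  have Fb: "ds_bounded_op p q F"
    using W unfolding eae_witness_def ds_invertible_def by blast
  have u: "(e, 0) \<in> ds_carrier p"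
    using e by (simp add: ds_carrier_def)
  then have "F (e, 0) \<in> ds_carrier q"
    using Fb unfolding ds_bounded_op_def by blast
  then have "ds_diag S (F (e, 0)) \<in> ds_carrier q"
    using S by (cases "F (e, 0)") (auto simp: ds_diag_def ds_carrier_def lp_bounded_op_def)
  with u have "GE (T e, 0) = ds_diag S (F (e, 0))"
    using W GE unfolding eae_witness_def by (metis ds_diag_def fst_conv snd_conv)
  then show ?thesis
    by (simp add: ds_diag_def)
qed

lemma eae_witness_snd_factor_right:
  assumes W: "eae_witness p q T S E F"
    and GF: "\<And>v. v \<in> ds_carrier q \<Longrightarrow> GF v \<in> ds_carrier p" "\<And>v. v \<in> ds_carrier q \<Longrightarrow> F (GF v) = v"
    and e: "e \<in> lp q"
  shows "snd (GF (e, 0)) = snd (E (S e, 0))"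
proof -
  have "(e, 0) \<in> ds_carrier q"
    using e by (simp add: ds_carrier_def)
  then have "ds_diag T (GF (e, 0)) = E (ds_diag S (e, 0))"
    using W GF unfolding eae_witness_def by metis
  then show ?thesis
    by (simp add: ds_diag_def) (metis snd_conv)
qed

theorem proposition4p5:
  fixes p q :: real
    and T S :: "(nat \<Rightarrow> complex) \<Rightarrow> (nat \<Rightarrow> complex)"
    and E :: "(nat \<Rightarrow> complex) \<times> 'y::complex_banach \<Rightarrow> (nat \<Rightarrow> complex) \<times> 'x::complex_banach"
    and F :: "(nat \<Rightarrow> complex) \<times> 'x \<Rightarrow> (nat \<Rightarrow> complex) \<times> 'y"
  assumes "1 \<le> p" and "1 \<le> q" and "p \<noteq> q"
    and "lp_bounded_op p p T" and "lp_bounded_op q q S"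
    and "lp_compact_op p T \<or> lp_compact_op q S"
  shows "\<not> eae_witness p q T S E F"
proof
  assume W: "eae_witness p q T S E F"
  then obtain GE where E: "ds_bounded_op q p E" "ds_bounded_op p q GE" "\<And>v. v \<in> ds_carrier q \<Longrightarrow> GE (E v) = v"
    unfolding eae_witness_def ds_invertible_def by blast
  obtain GF where F: "ds_bounded_op p q F" "ds_bounded_op q p GF"
    "\<And>u. u \<in> ds_carrier p \<Longrightarrow> GF (F u) = u" "\<And>v. v \<in> ds_carrier q \<Longrightarrow> F (GF v) = v"
    using W unfolding eae_witness_def ds_invertible_def by blast
  have GF_carrier: "\<And>v. v \<in> ds_carrier q \<Longrightarrow> GF v \<in> ds_carrier p"
    using F(2) unfolding ds_bounded_op_def by blast
  from assms(6) have "p = q"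
  proof
    assume "lp_compact_op p T"
    then show "p = q"
      using compact_snd_factor_imp_exponents_eq[OF assms(1,2) _ F(1,2,3) E(2)]
        eae_witness_snd_factor_left[OF W assms(5) E(3)] by blast
  next
    assume "lp_compact_op q S"
    then show "p = q"
      using compact_snd_factor_imp_exponents_eq[OF assms(2,1) _ F(2,1,4) E(1)]
        eae_witness_snd_factor_right[OF W GF_carrier F(4)] by fastforce
  qed
  with assms(3) show False ..
qed

end
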